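(* Let $p\in(0,1)$. Then $L^\infty(\mathbb R^n)\cap\mathcal L^{\Phi_p}(\mathbb R^n)=L^\infty(\mathbb R^n)\cap\mathcal L^{\Phi_p}_{\rm loc}(\mathbb R^n)$; equivalently, $L^\infty(\mathbb R^n)\cap(H^{\Phi_p}(\mathbb R^n))^*=L^\infty(\mathbb R^n)\cap(h^{\Phi_p}(\mathbb R^n))^*$.
   Context: $\Phi_p(\tau):=\tau/(1+\tau^{1-p})$; $\|f\|_{L^{\Phi_p}}:=\inf\{\lambda>0:\int\Phi_p(|f|/\lambda)\le1\}$; $d:=\lfloor n(1/p-1)\rfloor$. For $g\in L^1_{\rm loc}$ and a ball $B$, $P_B^dg$ is the unique polynomial $P$ of degree $\le d$ with $\int_B(g-P)R=0$ for all polynomials $R$ of degree $\le d$. The Orlicz Campanato space $\mathcal L^{\Phi_p}(\mathbb R^n)$ is the set of $g\in L^1_{\rm loc}$ with $\sup_{B}\|\mathbf 1_B\|_{L^{\Phi_p}}^{-1}\int_B|g-P_B^dg|<\infty$ (sup over all balls); it is the dual of the Orlicz Hardy space $H^{\Phi_p}(\mathbb R^n)$. The local Orlicz Campanato space $\mathcal L^{\Phi_p}_{\rm loc}(\mathbb R^n)$ is the set of $g\in L^1_{\rm loc}$ with $\sup_{|B|<1}\|\mathbf 1_B\|_{L^{\Phi_p}}^{-1}\int_B|g-P_B^dg|+\sup_{|B|\ge1}\|\mathbf 1_B\|_{L^{\Phi_p}}^{-1}\int_B|g|<\infty$; it is the dual of the local Orlicz Hardy space $h^{\Phi_p}(\mathbb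 R^n)$. *)

theory Defs
  imports "HOL-Analysis.Analysis"
begin

definition Phi :: "real \<Rightarrow> real \<Rightarrow> real" where
  "Phi p \<tau> = \<tau> / (1 + \<tau> powr (1 - p))"

definition orlicz_norm :: "real \<Rightarrow> ('a::euclidean_space \<Rightarrow> real) \<Rightarrow> real" where
  "orlicz_norm p f =
     Inf {l::real. l > 0 \<and> (\<integral>\<^sup>+ x. ennreal (Phi p (\<bar>f x\<bar> / l)) \<partial>lborel) \<le> 1}"

definition deg_p :: "real \<Rightarrow> nat \<Rightarrow> nat" where
  "deg_p p n = nat \<lfloor>real n * (1 / p - 1)\<rfloor>"

definition multi_indices :: "nat \<Rightarrow> ('a::euclidean_space \<Rightarrow> nat) set" where
  "multi_indices d = {\<alpha>. (\<forall>b. b \<notin> Basis \<longrightarrow> \<alpha> b = 0) \<and> (\<Sum>b\<in>Basis. \<alpha> b) \<le> d}"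

definition polys :: "nat \<Rightarrow> ('a::euclidean_space \<Rightarrow> real) set" where
  "polys d = {P. \<exists>c. P = (\<lambda>x. \<Sum>\<alpha>\<in>multi_indices d. c \<alpha> * (\<Prod>b\<in>Basis. (x \<bullet> b) ^ \<alpha> b))}"

definition poly_proj :: "nat \<Rightarrow> 'a::euclidean_space set \<Rightarrow> ('a \<Rightarrow> real) \<Rightarrow> ('a \<Rightarrow> real)" where
  "poly_proj d B g = (THE P. P \<in> polys d \<and>
      (\<forall>R\<in>polys d. (LINT x:B|lborel. (g x - P x) * R x) = 0))"

definition locally_integrable :: "('a::euclidean_space \<Rightarrow> real) \<Rightarrow> bool" where
  "locally_integrable g \<longleftrightarrow> g \<in> borel_measurable lborel \<and>
      (\<forall>K. compact K \<longrightarrow> set_integrable lborel K g)"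

definition essentially_bounded :: "('a::euclidean_space \<Rightarrow> real) \<Rightarrow> bool" where
  "essentially_bounded g \<longleftrightarrow> g \<in> borel_measurable lborel \<and>
      (\<exists>C. AE x in lborel. \<bar>g x\<bar> \<le> C)"

definition campanato :: "real \<Rightarrow> ('a::euclidean_space \<Rightarrow> real) \<Rightarrow> bool" where
  "campanato p g \<longleftrightarrow> locally_integrable g \<and>
     (\<exists>C. \<forall>x r. r > 0 \<longrightarrow>
        (LINT y:ball x r|lborel. \<bar>g y - poly_proj (deg_p p DIM('a)) (ball x r) g y\<bar>)
          / orlicz_norm p (indicator (ball x r)) \<le> C)"

definition campanato_loc :: "real \<Rightarrow> ('a::euclidean_space \<Rightarrow> real) \<Rightarrow> bool" where
  "campanato_loc p g \<longleftrightarrow> locally_integrable g \<and>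
     (\<exists>C. (\<forall>x r. r > 0 \<longrightarrow> measure lborel (ball x r) < 1 \<longrightarrow>
        (LINT y:ball x r|lborel. \<bar>g y - poly_proj (deg_p p DIM('a)) (ball x r) g y\<bar>)
          / orlicz_norm p (indicator (ball x r)) \<le> C) \<and>
         (\<forall>x r. r > 0 \<longrightarrow> measure lborel (ball x r) \<ge> 1 \<longrightarrow>
        (LINT y:ball x r|lborel. \<bar>g y\<bar>)
          / orlicz_norm p (indicator (ball x r)) \<le> C))"

end

theory Submission
  imports Defs "HOL-Computational_Algebra.Polynomial"
begin

text \<open>For essentially bounded g, say |g| \<le> M, the two Campanato conditions differ only on
  balls B with |B| \<ge> 1, and on those both quotients are bounded by a constant depending only on
  M and p. Indeed Phi_p(t) \<ge> min(t, t^p) / 2 forces ||1_B||_{L^Phi_p} \<ge> 2^(-1/p) |B| / 2 once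
  |B| \<ge> 1, while \<integral>_B |g| \<le> M |B| and \<integral>_B |P| \<le> M |B| for the L^2(B)-orthogonal projection
  P = P_B^d g: orthogonality gives \<integral>_B P^2 = \<integral>_B g P \<le> M \<integral>_B |P|, and integrating
  |P| \<le> P^2 / (2M) + M / 2 yields the claim.\<close>

definition ae_bounded_on :: "'a::euclidean_space set \<Rightarrow> ('a \<Rightarrow> real) \<Rightarrow> bool" where
  "ae_bounded_on B f \<longleftrightarrow>
     f \<in> borel_measurable lborel \<and> (\<exists>C. AE x in lborel. x \<in> B \<longrightarrow> \<bar>f x\<bar> \<le> C)"

lemma ae_bounded_on_const: "ae_bounded_on B (\<lambda>x. a)"
  unfolding ae_bounded_on_def by auto

lemma ae_bounded_on_abs: "ae_bounded_on B f \<Longrightarrow> ae_bounded_on B (\<lambda>x. \<bar>f x\<bar>)"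
  unfolding ae_bounded_on_def by auto

lemma ae_bounded_on_add:
  assumes "ae_bounded_on B f" "ae_bounded_on B h"
  shows "ae_bounded_on B (\<lambda>x. f x + h x)"
proof -
  obtain C1 C2 where "AE x in lborel. x \<in> B \<longrightarrow> \<bar>f x\<bar> \<le> C1"
    and "AE x in lborel. x \<in> B \<longrightarrow> \<bar>h x\<bar> \<le> C2"
    using assms unfolding ae_bounded_on_def by blast
  then have "AE x in lborel. x \<in> B \<longrightarrow> \<bar>f x + h x\<bar> \<le> C1 + C2"
    by eventually_elim auto
  then show ?thesis using assms unfolding ae_bounded_on_def by auto
qed

lemma ae_bounded_on_mult:
  assumes "ae_bounded_on B f" "ae_bounded_on B h"
  shows "ae_bounded_on B (\<lambda>x. f x * h x)"
proof -
  obtain C1 C2 where "AE x in lborel. x \<in> B \<longrightarrow> \<bar>f x\<bar> \<le> C1"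
    and "AE x in lborel. x \<in> B \<longrightarrow> \<bar>h x\<bar> \<le> C2"
    using assms unfolding ae_bounded_on_def by blast
  then have "AE x in lborel. x \<in> B \<longrightarrow> \<bar>f x * h x\<bar> \<le> C1 * C2"
    by eventually_elim (auto simp: abs_mult intro!: mult_mono)
  then show ?thesis using assms unfolding ae_bounded_on_def by auto
qed

lemma ae_bounded_on_scaled: "ae_bounded_on B f \<Longrightarrow> ae_bounded_on B (\<lambda>x. a * f x)"
  using ae_bounded_on_mult[OF ae_bounded_on_const] by blast

lemma ae_bounded_on_diff:
  "ae_bounded_on B f \<Longrightarrow> ae_bounded_on B h \<Longrightarrow> ae_bounded_on B (\<lambda>x. f x - h x)"
  using ae_bounded_on_add[of B f "\<lambda>x. (-1) * h x"] ae_bounded_on_scaled[of B h "-1"] by simp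

lemma ae_bounded_on_lincomb:
  "finite A \<Longrightarrow> (\<And>i. i \<in> A \<Longrightarrow> ae_bounded_on B (u i)) \<Longrightarrow>
    ae_bounded_on B (\<lambda>x. \<Sum>i\<in>A. c i * u i x)"
  by (induction A rule: finite_induct) (simp_all add: ae_bounded_on_const ae_bounded_on_add ae_bounded_on_scaled)

lemma ae_bounded_on_set_integrable:
  assumes "B \<in> sets lborel" "emeasure lborel B < \<infinity>" "ae_bounded_on B f"
  shows "set_integrable lborel B f"
proof -
  obtain C where C: "AE x in lborel. x \<in> B \<longrightarrow> \<bar>f x\<bar> \<le> C"
    and f: "f \<in> borel_measurable lborel"
    using assms(3) unfolding ae_bounded_on_def by blast
  have "integrable lborel (\<lambda>x. C * indicator B x)"
    using assms(1,2) by auto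
  moreover have "(\<lambda>x. indicator B x *\<^sub>R f x) \<in> borel_measurable lborel"
    using f assms(1) by simp
  moreover have "AE x in lborel. norm (indicator B x *\<^sub>R f x) \<le> norm (C * indicator B x)"
    using C by eventually_elim (auto simp: indicator_def)
  ultimately show ?thesis
    unfolding set_integrable_def by (rule Bochner_Integration.integrable_bound)
qed

definition inner_on :: "'a::euclidean_space set \<Rightarrow> ('a \<Rightarrow> real) \<Rightarrow> ('a \<Rightarrow> real) \<Rightarrow> real" where
  "inner_on B f h = (LINT x:B|lborel. f x * h x)"

lemma inner_on_commute: "inner_on B f h = inner_on B h f"
  unfolding inner_on_def by (simp add: mult.commute)

lemma inner_on_scaled: "inner_on B (\<lambda>x. a * f x) h = a * inner_on B f h"
  unfolding inner_on_def by (simp add: mult.assoc)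

context
  fixes B :: "'a::euclidean_space set"
  assumes B_sets: "B \<in> sets lborel" and B_finite: "emeasure lborel B < \<infinity>"
begin

lemma inner_on_add:
  "ae_bounded_on B f \<Longrightarrow> ae_bounded_on B g \<Longrightarrow> ae_bounded_on B h \<Longrightarrow>
    inner_on B (\<lambda>x. f x + g x) h = inner_on B f h + inner_on B g h"
  unfolding inner_on_def distrib_right
  by (intro set_integral_add(2) ae_bounded_on_set_integrable[OF B_sets B_finite] ae_bounded_on_mult)

lemma inner_on_diff:
  "ae_bounded_on B f \<Longrightarrow> ae_bounded_on B g \<Longrightarrow> ae_bounded_on B h \<Longrightarrow>
    inner_on B (\<lambda>x. f x - g x) h = inner_on B f h - inner_on B g h"
  unfolding inner_on_def left_diff_distrib
  by (intro set_integral_diff(2) ae_bounded_on_set_integrable[OF B_sets B_finite] ae_bounded_on_mult)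

lemma inner_on_lincomb:
  "finite A \<Longrightarrow> (\<And>i. i \<in> A \<Longrightarrow> ae_bounded_on B (u i)) \<Longrightarrow> ae_bounded_on B h \<Longrightarrow>
    inner_on B (\<lambda>x. \<Sum>i\<in>A. c i * u i x) h = (\<Sum>i\<in>A. c i * inner_on B (u i) h)"
proof (induction A rule: finite_induct)
  case empty
  then show ?case by (simp add: inner_on_def)
next
  case (insert a A)
  then show ?case
    by (simp add: inner_on_add ae_bounded_on_scaled ae_bounded_on_lincomb inner_on_scaled)
qed

lemma inner_on_orthogonal_lincomb:
  assumes "finite A" "\<And>i. i \<in> A \<Longrightarrow> ae_bounded_on B (u i)" "ae_bounded_on B h"
    and "\<forall>j\<in>A. inner_on B h (u j) = 0"
  shows "inner_on B h (\<lambda>x. \<Sum>i\<in>A. c i * u i x) = 0"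
  using assms by (simp add: inner_on_commute[of B h] inner_on_lincomb)

lemma AE_zero_if_inner_on_self_eq_0:
  assumes "ae_bounded_on B r" "inner_on B r r = 0"
  shows "AE x in lborel. x \<in> B \<longrightarrow> r x = 0"
proof -
  have "integrable lborel (\<lambda>x. indicator B x *\<^sub>R (r x * r x))"
    using ae_bounded_on_set_integrable[OF B_sets B_finite ae_bounded_on_mult[OF assms(1,1)]]
    unfolding set_integrable_def .
  then have "AE x in lborel. indicator B x *\<^sub>R (r x * r x) = 0"
    using assms(2) unfolding inner_on_def set_lebesgue_integral_def
    by (subst (asm) integral_nonneg_eq_0_iff_AE) (auto simp: indicator_def)
  then show ?thesis
    by eventually_elim (auto simp: indicator_def split: if_splits)
qed

lemma exists_orthogonal_correction:
  assumes "ae_bounded_on B f" "ae_bounded_on B r"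
  shows "\<exists>a. inner_on B (\<lambda>x. f x - a * r x) r = 0"
proof (cases "inner_on B r r = 0")
  case True
  then have "AE x in lborel. x \<in> B \<longrightarrow> r x = 0"
    using AE_zero_if_inner_on_self_eq_0 assms(2) by blast
  then have "AE x in lborel. indicator B x *\<^sub>R ((f x - 0 * r x) * r x) = 0"
    by eventually_elim (auto simp: indicator_def)
  then show ?thesis
    unfolding inner_on_def set_lebesgue_integral_def by (auto intro!: exI[of _ 0] integral_eq_zero_AE)
next
  case False
  define a where "a = inner_on B f r / inner_on B r r"
  have "inner_on B (\<lambda>x. f x - a * r x) r = inner_on B f r - a * inner_on B r r"
    by (simp add: inner_on_diff inner_on_scaled ae_bounded_on_scaled assms)
  also have "\<dots> = 0"
    using False by (simp add: a_def)
  finally show ?thesis ..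
qed

lemma set_integral_abs_le_measure:
  assumes "f \<in> borel_measurable lborel" "AE x in lborel. x \<in> B \<longrightarrow> \<bar>f x\<bar> \<le> M"
  shows "(LINT x:B|lborel. \<bar>f x\<bar>) \<le> M * measure lborel B"
proof -
  have "(LINT x:B|lborel. \<bar>f x\<bar>) \<le> (LINT x:B|lborel. M)"
    using assms
    by (intro set_integral_mono_AE ae_bounded_on_set_integrable[OF B_sets B_finite] ae_bounded_on_abs
        ae_bounded_on_const) (auto simp: ae_bounded_on_def elim: eventually_mono)
  also have "\<dots> = M * measure lborel B"
    using B_sets B_finite by (simp add: set_integral_const measure_def)
  finally show ?thesis .
qed

lemma inner_on_le_bound_times_integral_abs:
  assumes bound: "AE x in lborel. x \<in> B \<longrightarrow> \<bar>g x\<bar> \<le> M"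
    and "ae_bounded_on B g" "ae_bounded_on B h"
  shows "inner_on B g h \<le> M * (LINT x:B|lborel. \<bar>h x\<bar>)"
proof -
  have "inner_on B g h \<le> (LINT x:B|lborel. M * \<bar>h x\<bar>)"
    unfolding inner_on_def
  proof (rule set_integral_mono_AE)
    show "AE x\<in>B in lborel. g x * h x \<le> M * \<bar>h x\<bar>"
      using bound
    proof eventually_elim
      case (elim x)
      then show ?case
        using abs_ge_self[of "g x * h x"] mult_right_mono[of "\<bar>g x\<bar>" M "\<bar>h x\<bar>"]
        by (auto simp: abs_mult)
    qed
  qed (intro ae_bounded_on_set_integrable[OF B_sets B_finite] ae_bounded_on_mult
      ae_bounded_on_scaled ae_bounded_on_abs assms(2,3))+
  then show ?thesis by simp
qed

lemma set_integral_abs_le_if_inner_on_self_le: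
  assumes P: "ae_bounded_on B P" and "0 < M"
    and PP: "inner_on B P P \<le> M * (LINT x:B|lborel. \<bar>P x\<bar>)"
  shows "(LINT x:B|lborel. \<bar>P x\<bar>) \<le> M * measure lborel B"
proof -
  have int: "set_integrable lborel B f" if "ae_bounded_on B f" for f
    using ae_bounded_on_set_integrable[OF B_sets B_finite that] .
  have am_gm: "\<bar>a\<bar> \<le> inverse (2 * M) * (a * a) + M / 2" for a :: real
  proof -
    have "2 * M * \<bar>a\<bar> \<le> a * a + M * M"
      using zero_le_square[of "\<bar>a\<bar> - M"] by (simp add: algebra_simps abs_mult_self_eq)
    then show ?thesis using \<open>M > 0\<close> by (simp add: field_simps)
  qed
  have "(LINT x:B|lborel. \<bar>P x\<bar>) \<le> (LINT x:B|lborel. inverse (2 * M) * (P x * P x) + M / 2)"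
    using am_gm
    by (intro set_integral_mono int ae_bounded_on_add ae_bounded_on_abs ae_bounded_on_scaled
        ae_bounded_on_mult ae_bounded_on_const P)
  also have "\<dots> = inverse (2 * M) * inner_on B P P + M / 2 * measure lborel B"
    using B_sets B_finite unfolding inner_on_def
    by (subst set_integral_add(2)) (auto intro!: int ae_bounded_on_scaled ae_bounded_on_mult
        ae_bounded_on_const P simp: set_integral_const measure_def)
  also have "\<dots> \<le> inverse (2 * M) * (M * (LINT x:B|lborel. \<bar>P x\<bar>)) + M / 2 * measure lborel B"
    using PP \<open>M > 0\<close> by simp
  finally show ?thesis
    using \<open>M > 0\<close> by (simp add: field_simps)
qed

lemma inner_on_orthogonal_insert:
  assumes "finite A" "\<And>i. i \<in> A \<Longrightarrow> ae_bounded_on B (u i)" "ae_bounded_on B (u a)"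
    and "ae_bounded_on B h" "\<forall>j\<in>A. inner_on B h (u j) = 0"
    and "inner_on B h (\<lambda>x. u a x - (\<Sum>i\<in>A. d i * u i x)) = 0"
  shows "inner_on B h (u a) = 0"
proof -
  define Q where "Q = (\<lambda>x. \<Sum>i\<in>A. d i * u i x)"
  have Q: "ae_bounded_on B Q"
    unfolding Q_def using ae_bounded_on_lincomb[OF assms(1,2)] .
  have "inner_on B h (u a) = inner_on B h (\<lambda>x. (u a x - Q x) + Q x)"
    by simp
  also have "\<dots> = inner_on B h (\<lambda>x. u a x - Q x) + inner_on B h Q"
    using inner_on_add[OF ae_bounded_on_diff[OF assms(3) Q] Q assms(4)]
    by (simp add: inner_on_commute[of B h])
  finally show ?thesis
    using assms(6) inner_on_orthogonal_lincomb[OF assms(1,2,4,5)] by (simp add: Q_def)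
qed

text \<open>Gram--Schmidt: orthogonalise \<open>u a\<close> against the \<open>u i\<close>, \<open>i \<in> A\<close>, then correct the
  residual of \<open>h\<close> along the result.\<close>

lemma exists_orthogonal_residual:
  assumes "finite A" "\<And>i. i \<in> A \<Longrightarrow> ae_bounded_on B (u i)" "ae_bounded_on B h"
  shows "\<exists>c. \<forall>j\<in>A. inner_on B (\<lambda>x. h x - (\<Sum>i\<in>A. c i * u i x)) (u j) = 0"
  using assms
proof (induction A arbitrary: h rule: finite_induct)
  case empty
  then show ?case by simp
next
  case (insert a A)
  have u: "\<And>i. i \<in> A \<Longrightarrow> ae_bounded_on B (u i)" and ua: "ae_bounded_on B (u a)"
    using insert.prems(1) by auto
  obtain c0 where c0: "\<forall>j\<in>A. inner_on B (\<lambda>x. h x - (\<Sum>i\<in>A. c0 i * u i x)) (u j) = 0"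
    using insert.IH[OF u insert.prems(2)] by blast
  obtain d where d: "\<forall>j\<in>A. inner_on B (\<lambda>x. u a x - (\<Sum>i\<in>A. d i * u i x)) (u j) = 0"
    using insert.IH[OF u ua] by blast
  define E where "E = (\<lambda>x. h x - (\<Sum>i\<in>A. c0 i * u i x))"
  define r where "r = (\<lambda>x. u a x - (\<Sum>i\<in>A. d i * u i x))"
  have E: "ae_bounded_on B E"
    unfolding E_def by (intro ae_bounded_on_diff insert.prems(2) ae_bounded_on_lincomb[OF insert.hyps(1) u])
  have r: "ae_bounded_on B r"
    unfolding r_def using ae_bounded_on_diff[OF ua ae_bounded_on_lincomb[OF insert.hyps(1) u]] .
  obtain \<alpha> where \<alpha>: "inner_on B (\<lambda>x. E x - \<alpha> * r x) r = 0"
    using exists_orthogonal_correction[OF E r] by blast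
  define F where "F = (\<lambda>x. E x - \<alpha> * r x)"
  have F: "ae_bounded_on B F"
    unfolding F_def by (intro ae_bounded_on_diff ae_bounded_on_scaled E r)
  have F_A: "\<forall>j\<in>A. inner_on B F (u j) = 0"
  proof
    fix j assume "j \<in> A"
    then have "inner_on B E (u j) = 0" "inner_on B r (u j) = 0"
      using c0 d by (simp_all add: E_def r_def)
    then show "inner_on B F (u j) = 0"
      unfolding F_def using \<open>j \<in> A\<close> u E r
      by (simp add: inner_on_diff ae_bounded_on_scaled inner_on_scaled)
  qed
  have F_a: "inner_on B F (u a) = 0"
    using inner_on_orthogonal_insert[OF insert.hyps(1) u ua F F_A] \<alpha> by (simp add: F_def r_def)
  define c where "c = (\<lambda>i. c0 i - \<alpha> * d i)(a := \<alpha>)"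
  have "(\<Sum>i\<in>A. c i * u i x) = (\<Sum>i\<in>A. (c0 i - \<alpha> * d i) * u i x)" for x
    unfolding c_def using insert.hyps(2) by (intro sum.cong) auto
  then have "F = (\<lambda>x. h x - (\<Sum>i\<in>insert a A. c i * u i x))"
    using insert.hyps
    by (auto simp: fun_eq_iff F_def E_def r_def c_def algebra_simps sum_subtractf
        sum_distrib_left)
  with F_A F_a show ?case by auto
qed

end

definition monomial :: "('a::euclidean_space \<Rightarrow> nat) \<Rightarrow> 'a \<Rightarrow> real" where
  "monomial \<alpha> x = (\<Prod>b\<in>Basis. (x \<bullet> b) ^ \<alpha> b)"

lemma polys_eq_monomial_sums:
  "polys d = {P. \<exists>c. P = (\<lambda>x. \<Sum>\<alpha>\<in>multi_indices d. c \<alpha> * monomial \<alpha> x)}"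
  unfolding polys_def monomial_def ..

lemma finite_multi_indices: "finite (multi_indices d :: ('a::euclidean_space \<Rightarrow> nat) set)"
proof -
  let ?extend = "\<lambda>f (b::'a). if b \<in> Basis then f b else (0::nat)"
  have "multi_indices d \<subseteq> ?extend ` (Basis \<rightarrow>\<^sub>E {..d})"
  proof
    fix \<alpha> :: "'a \<Rightarrow> nat"
    assume "\<alpha> \<in> multi_indices d"
    then have zero: "\<forall>b. b \<notin> Basis \<longrightarrow> \<alpha> b = 0" and sum: "(\<Sum>b\<in>Basis. \<alpha> b) \<le> d"
      unfolding multi_indices_def by auto
    have "\<alpha> b \<le> d" if "b \<in> Basis" for b
      using member_le_sum[of b Basis \<alpha>] that sum by auto
    then have "restrict \<alpha> Basis \<in> Basis \<rightarrow>\<^sub>E {..d}" by auto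
    moreover have "\<alpha> = ?extend (restrict \<alpha> Basis)" using zero by auto
    ultimately show "\<alpha> \<in> ?extend ` (Basis \<rightarrow>\<^sub>E {..d})" by blast
  qed
  then show ?thesis
    by (rule finite_subset) (intro finite_imageI finite_PiE; simp)
qed

lemma polys_diff: "P \<in> polys d \<Longrightarrow> R \<in> polys d \<Longrightarrow> (\<lambda>x. P x - R x) \<in> polys d"
proof -
  assume "P \<in> polys d" "R \<in> polys d"
  then obtain a b where "P = (\<lambda>x. \<Sum>\<alpha>\<in>multi_indices d. a \<alpha> * monomial \<alpha> x)"
    and "R = (\<lambda>x. \<Sum>\<alpha>\<in>multi_indices d. b \<alpha> * monomial \<alpha> x)"
    unfolding polys_eq_monomial_sums by blast
  then show ?thesis
    unfolding polys_eq_monomial_sums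
    by (auto intro!: exI[of _ "\<lambda>\<alpha>. a \<alpha> - b \<alpha>"] simp: left_diff_distrib sum_subtractf)
qed

lemma continuous_on_poly: "P \<in> polys d \<Longrightarrow> continuous_on UNIV P"
  unfolding polys_def by (auto intro!: continuous_intros)

lemma ae_bounded_on_monomial:
  assumes "bounded S"
  shows "ae_bounded_on S (monomial \<alpha>)"
proof -
  obtain R where R: "\<And>x. x \<in> S \<Longrightarrow> norm x \<le> R"
    using assms by (auto simp: bounded_iff)
  have "\<bar>monomial \<alpha> x\<bar> \<le> (\<Prod>b\<in>(Basis::'a set). R ^ \<alpha> b)" if "x \<in> S" for x
    unfolding monomial_def abs_prod power_abs
  proof (intro prod_mono conjI power_mono)
    fix b :: 'a
    assume "b \<in> Basis"
    then show "\<bar>x \<bullet> b\<bar> \<le> R" using R[OF that] Basis_le_norm order.trans by blast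
  qed auto
  moreover have "continuous_on UNIV (monomial \<alpha>)"
    unfolding monomial_def by (intro continuous_intros)
  then have "monomial \<alpha> \<in> borel_measurable lborel"
    by (simp add: borel_measurable_continuous_onI)
  ultimately show ?thesis
    unfolding ae_bounded_on_def by (intro conjI exI AE_I2) auto
qed

lemma ae_bounded_on_poly: "bounded S \<Longrightarrow> P \<in> polys d \<Longrightarrow> ae_bounded_on S P"
  unfolding polys_eq_monomial_sums
  by (auto intro!: ae_bounded_on_lincomb finite_multi_indices ae_bounded_on_monomial)

lemma poly_restricted_to_line:
  assumes "P \<in> polys d"
  shows "\<exists>q. \<forall>t. P (x + t *\<^sub>R v) = poly q t"
proof -
  obtain c where P: "P = (\<lambda>y. \<Sum>\<alpha>\<in>multi_indices d. c \<alpha> * monomial \<alpha> y)"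
    using assms unfolding polys_eq_monomial_sums by blast
  have coord: "poly [:x \<bullet> b, v \<bullet> b:] t = (x + t *\<^sub>R v) \<bullet> b" for b t
    by (simp add: inner_add_left)
  show ?thesis
    unfolding P monomial_def
    by (intro exI[of _ "\<Sum>\<alpha>\<in>multi_indices d. smult (c \<alpha>) (\<Prod>b\<in>Basis. [:x \<bullet> b, v \<bullet> b:] ^ \<alpha> b)"])
       (simp only: poly_sum poly_smult poly_prod poly_power coord, simp)
qed

lemma poly_eq_0_if_vanishes_on_open:
  assumes "P \<in> polys d" "open S" "S \<noteq> {}" "\<forall>x\<in>S. P x = 0"
  shows "P y = 0"
proof -
  obtain x where "x \<in> S" using assms(3) by blast
  then obtain r where "r > 0" and ball: "ball x r \<subseteq> S"
    using assms(2) openE by blast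
  obtain q where q: "\<And>t. P (x + t *\<^sub>R (y - x)) = poly q t"
    using poly_restricted_to_line[OF assms(1)] by blast
  have norm_pos: "0 < norm (y - x) + 1"
    by (simp add: add_nonneg_pos)
  define \<delta> where "\<delta> = r / (norm (y - x) + 1)"
  have "\<delta> > 0" unfolding \<delta>_def using \<open>r > 0\<close> norm_pos by simp
  have "{0<..<\<delta>} \<subseteq> {t. poly q t = 0}"
  proof
    fix t assume t: "t \<in> {0<..<\<delta>}"
    have "norm (y - x) * t < (norm (y - x) + 1) * \<delta>"
      using t by (intro mult_strict_mono') auto
    also have "\<dots> = r" unfolding \<delta>_def using norm_pos by simp
    finally have "x + t *\<^sub>R (y - x) \<in> ball x r"
      using t by (simp add: dist_norm mult.commute)
    then show "t \<in> {t. poly q t = 0}" using assms(4) ball q[of t] by auto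
  qed
  then have "q = 0"
    using poly_roots_finite[of q] \<open>\<delta> > 0\<close> by (metis finite_subset infinite_Ioo)
  then show ?thesis using q[of 1] by simp
qed

lemma continuous_eq_0_if_AE_eq_0_on_open:
  fixes f :: "'a::euclidean_space \<Rightarrow> real"
  assumes "continuous_on UNIV f" "open S" "AE x in lborel. x \<in> S \<longrightarrow> f x = 0" "y \<in> S"
  shows "f y = 0"
proof (rule ccontr)
  assume "f y \<noteq> 0"
  moreover have "open (S \<inter> {x. f x \<noteq> 0})"
    using assms(1,2) by (intro open_Int open_Collect_neq continuous_intros) auto
  ultimately obtain e where "e > 0" and ball: "ball y e \<subseteq> S \<inter> {x. f x \<noteq> 0}"
    using assms(4) openE[of _ y] by blast
  obtain N where N: "{x \<in> space lborel. \<not> (x \<in> S \<longrightarrow> f x = 0)} \<subseteq> N"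
      "emeasure lborel N = 0" "N \<in> sets lborel"
    using AE_E[OF assms(3)] by blast
  have "emeasure lborel (ball y e) \<le> emeasure lborel N"
    using ball N by (intro emeasure_mono) auto
  moreover have "emeasure lborel (ball y e) > 0"
    using \<open>e > 0\<close> by (simp add: emeasure_ball)
  ultimately show False using N(2) by simp
qed

definition is_poly_proj :: "nat \<Rightarrow> 'a::euclidean_space set \<Rightarrow> ('a \<Rightarrow> real) \<Rightarrow> ('a \<Rightarrow> real) \<Rightarrow> bool" where
  "is_poly_proj d B g P \<longleftrightarrow> P \<in> polys d \<and> (\<forall>R\<in>polys d. inner_on B (\<lambda>x. g x - P x) R = 0)"

text \<open>poly_proj is a definite description, so its properties need uniqueness of the
  projection; that is where \<open>B\<close> open and nonempty is used: a polynomial vanishing almost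
  everywhere on \<open>B\<close> vanishes identically.\<close>

context
  fixes B :: "'a::euclidean_space set"
  assumes open_B: "open B" and bounded_B: "bounded B" and B_nonempty: "B \<noteq> {}"
begin

private lemma B_measurable_finite: "B \<in> sets lborel" "emeasure lborel B < \<infinity>"
  using borel_open[OF open_B] emeasure_bounded_finite[OF bounded_B] by auto

lemma exists_is_poly_proj:
  assumes g: "ae_bounded_on B g"
  shows "\<exists>P. is_poly_proj d B g P"
proof -
  let ?I = "multi_indices d :: ('a \<Rightarrow> nat) set"
  have u: "\<And>\<alpha>. ae_bounded_on B (monomial \<alpha>)"
    using ae_bounded_on_monomial[OF bounded_B] .
  obtain c where c: "\<forall>\<beta>\<in>?I. inner_on B (\<lambda>x. g x - (\<Sum>\<alpha>\<in>?I. c \<alpha> * monomial \<alpha> x)) (monomial \<beta>) = 0"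
    using exists_orthogonal_residual[OF B_measurable_finite finite_multi_indices,
        where u = monomial, OF u g]
    by blast
  define P where "P = (\<lambda>x. \<Sum>\<alpha>\<in>?I. c \<alpha> * monomial \<alpha> x)"
  have residual: "ae_bounded_on B (\<lambda>x. g x - P x)"
    unfolding P_def by (intro ae_bounded_on_diff g ae_bounded_on_lincomb finite_multi_indices u)
  have "inner_on B (\<lambda>x. g x - P x) R = 0" if R: "R \<in> polys d" for R
  proof -
    obtain c' where "R = (\<lambda>x. \<Sum>\<alpha>\<in>?I. c' \<alpha> * monomial \<alpha> x)"
      using R unfolding polys_eq_monomial_sums by blast
    moreover have "\<forall>\<beta>\<in>?I. inner_on B (\<lambda>x. g x - P x) (monomial \<beta>) = 0"
      using c by (simp add: P_def)
    ultimately show ?thesis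
      using inner_on_orthogonal_lincomb[OF B_measurable_finite finite_multi_indices,
          where u = monomial, OF u residual]
      by blast
  qed
  moreover have "P \<in> polys d"
    unfolding P_def polys_eq_monomial_sums by blast
  ultimately show ?thesis
    unfolding is_poly_proj_def by blast
qed

lemma is_poly_proj_unique:
  assumes g: "ae_bounded_on B g" and P: "is_poly_proj d B g P" and R: "is_poly_proj d B g R"
  shows "P = R"
proof -
  define D where "D = (\<lambda>x. P x - R x)"
  have polys: "P \<in> polys d" "R \<in> polys d" "D \<in> polys d"
    using P R polys_diff unfolding is_poly_proj_def D_def by blast+
  then have bounded: "ae_bounded_on B P" "ae_bounded_on B R" "ae_bounded_on B D"
    using ae_bounded_on_poly[OF bounded_B] by blast+
  have "D = (\<lambda>x. (g x - R x) - (g x - P x))"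
    by (simp add: D_def)
  then have "inner_on B D D = inner_on B (\<lambda>x. g x - R x) D - inner_on B (\<lambda>x. g x - P x) D"
    using inner_on_diff[OF B_measurable_finite ae_bounded_on_diff[OF g bounded(2)]
        ae_bounded_on_diff[OF g bounded(1)] bounded(3)]
    by simp
  also have "\<dots> = 0"
    using P R polys(3) unfolding is_poly_proj_def by simp
  finally have "AE x in lborel. x \<in> B \<longrightarrow> D x = 0"
    using AE_zero_if_inner_on_self_eq_0[OF B_measurable_finite bounded(3)] by blast
  then have "\<forall>x\<in>B. D x = 0"
    using continuous_eq_0_if_AE_eq_0_on_open[OF continuous_on_poly[OF polys(3)] open_B] by blast
  then show ?thesis
    using poly_eq_0_if_vanishes_on_open[OF polys(3) open_B B_nonempty] by (auto simp: D_def)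
qed

lemma is_poly_proj_poly_proj:
  assumes "ae_bounded_on B g"
  shows "is_poly_proj d B g (poly_proj d B g)"
proof -
  have "poly_proj d B g = (THE P. is_poly_proj d B g P)"
    unfolding poly_proj_def is_poly_proj_def inner_on_def ..
  moreover have "\<exists>!P. is_poly_proj d B g P"
    using exists_is_poly_proj[OF assms] is_poly_proj_unique[OF assms] by blast
  ultimately show ?thesis
    using theI'[of "is_poly_proj d B g"] by simp
qed

lemma set_integral_abs_poly_proj_le:
  assumes g: "g \<in> borel_measurable lborel" and bound: "AE x in lborel. x \<in> B \<longrightarrow> \<bar>g x\<bar> \<le> M"
    and "M > 0"
  shows "(LINT x:B|lborel. \<bar>poly_proj d B g x\<bar>) \<le> M * measure lborel B"
proof -
  have g_bounded: "ae_bounded_on B g"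
    using g bound unfolding ae_bounded_on_def by blast
  define P where "P = poly_proj d B g"
  have "is_poly_proj d B g P"
    unfolding P_def using is_poly_proj_poly_proj[OF g_bounded] .
  then have "P \<in> polys d" and orth: "inner_on B (\<lambda>x. g x - P x) P = 0"
    unfolding is_poly_proj_def by auto
  then have P: "ae_bounded_on B P"
    using ae_bounded_on_poly[OF bounded_B] by blast
  have "inner_on B P P = inner_on B g P"
    using orth inner_on_diff[OF B_measurable_finite g_bounded P P] by simp
  also have "\<dots> \<le> M * (LINT x:B|lborel. \<bar>P x\<bar>)"
    using inner_on_le_bound_times_integral_abs[OF B_measurable_finite bound g_bounded P] .
  finally show ?thesis
    using set_integral_abs_le_if_inner_on_self_le[OF B_measurable_finite P \<open>M > 0\<close>]
    unfolding P_def by blast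
qed

lemma set_integral_abs_diff_poly_proj_le:
  assumes g: "g \<in> borel_measurable lborel" and bound: "AE x in lborel. x \<in> B \<longrightarrow> \<bar>g x\<bar> \<le> M"
    and "M > 0"
  shows "(LINT x:B|lborel. \<bar>g x - poly_proj d B g x\<bar>) \<le> 2 * M * measure lborel B"
proof -
  have "ae_bounded_on B g"
    using g bound unfolding ae_bounded_on_def by blast
  then have P: "ae_bounded_on B (poly_proj d B g)"
    using is_poly_proj_poly_proj ae_bounded_on_poly[OF bounded_B]
    unfolding is_poly_proj_def by blast
  have "(LINT x:B|lborel. \<bar>g x - poly_proj d B g x\<bar>)
      \<le> (LINT x:B|lborel. \<bar>g x\<bar> + \<bar>poly_proj d B g x\<bar>)"
    using \<open>ae_bounded_on B g\<close> P
    by (intro set_integral_mono ae_bounded_on_set_integrable[OF B_measurable_finite] ae_bounded_on_abs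
        ae_bounded_on_diff ae_bounded_on_add abs_triangle_ineq4)
  also have "\<dots> = (LINT x:B|lborel. \<bar>g x\<bar>) + (LINT x:B|lborel. \<bar>poly_proj d B g x\<bar>)"
    using \<open>ae_bounded_on B g\<close> P
    by (intro set_integral_add(2) ae_bounded_on_set_integrable[OF B_measurable_finite] ae_bounded_on_abs)
  finally show ?thesis
    using set_integral_abs_le_measure[OF B_measurable_finite assms(1,2)]
      set_integral_abs_poly_proj_le[OF assms, where d = d]
    by simp
qed

end

lemma Phi_nonneg: "0 \<le> t \<Longrightarrow> 0 \<le> Phi p t"
  unfolding Phi_def by simp

lemma Phi_le: "0 \<le> t \<Longrightarrow> Phi p t \<le> t"
  unfolding Phi_def using frac_le[of t t 1 "1 + t powr (1 - p)"] by simp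

lemma Phi_ge_if_le_1:
  assumes "p \<le> 1" "0 \<le> t" "t \<le> 1"
  shows "t / 2 \<le> Phi p t"
proof -
  have "t powr (1 - p) \<le> 1"
    using assms by (intro powr_le1) auto
  then show ?thesis
    unfolding Phi_def using assms(2) by (intro divide_left_mono) (auto simp: add_pos_nonneg)
qed

lemma Phi_ge_if_ge_1:
  assumes "p \<le> 1" "1 \<le> t"
  shows "t powr p / 2 \<le> Phi p t"
proof -
  have "1 \<le> t powr (1 - p)"
    using assms by (intro ge_one_powr_ge_zero) auto
  then have "t / (2 * t powr (1 - p)) \<le> Phi p t"
    unfolding Phi_def using assms(2) by (intro divide_left_mono) auto
  moreover have "t / t powr (1 - p) = t powr p"
    using assms(2) powr_diff[of t 1 "1 - p"] by simp
  ultimately show ?thesis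
    by simp
qed

lemma Phi_inverse_times_le_1_imp:
  assumes p: "0 < p" "p < 1" and "1 \<le> m" "0 < l" and Phi: "Phi p (1 / l) * m \<le> 1"
  shows "2 powr (-1 / p) / 2 * m \<le> l"
proof -
  have "1 \<le> 2 powr (1 / p)"
    using p by (intro ge_one_powr_ge_zero) auto
  then have two_powr: "2 powr (-1 / p) \<le> 1"
    by (simp add: powr_minus inverse_le_1_iff)
  show ?thesis
  proof (cases "1 / l \<le> 1")
    case True
    then have "1 / l / 2 * m \<le> Phi p (1 / l) * m"
      using Phi_ge_if_le_1[of p "1 / l"] p \<open>0 < l\<close> \<open>1 \<le> m\<close> by (intro mult_right_mono) auto
    then have "1 / l / 2 * m \<le> 1"
      using Phi by linarith
    then have "m \<le> 2 * l"
      using \<open>0 < l\<close> by (simp add: field_simps)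
    moreover have "2 powr (-1 / p) * m \<le> m"
      using two_powr \<open>1 \<le> m\<close> by (simp add: mult_left_le_one_le)
    ultimately show ?thesis by simp
  next
    case False
    define t where "t = 1 / l"
    have "1 \<le> t" "0 < t" and l: "l = 1 / t"
      using False \<open>0 < l\<close> unfolding t_def by auto
    have "1 \<le> t powr p"
      using \<open>1 \<le> t\<close> p by (intro ge_one_powr_ge_zero) auto
    have "t powr p / 2 * m \<le> Phi p t * m"
      using Phi_ge_if_ge_1[of p t] p \<open>1 \<le> t\<close> \<open>1 \<le> m\<close> by (intro mult_right_mono) auto
    then have m_tp: "t powr p * m \<le> 2"
      using Phi unfolding t_def[symmetric] by linarith
    then have "m \<le> 2" and "t powr p \<le> 2"
      using \<open>1 \<le> t powr p\<close> \<open>1 \<le> m\<close> mult_right_mono[of 1 "t powr p" m] mult_left_mono[of 1 m "t powr p"]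
      by linarith+
    have "t = (t powr p) powr (1 / p)"
      using \<open>0 < t\<close> p by (simp add: powr_powr)
    also have "\<dots> \<le> 2 powr (1 / p)"
      using \<open>t powr p \<le> 2\<close> p by (intro powr_mono2) auto
    finally have "2 powr (-1 / p) \<le> l"
      unfolding l using \<open>0 < t\<close> by (simp add: powr_minus_divide divide_left_mono)
    moreover have "2 powr (-1 / p) * m \<le> 2 powr (-1 / p) * 2"
      using \<open>m \<le> 2\<close> by (intro mult_left_mono) auto
    ultimately show ?thesis by linarith
  qed
qed

lemma orlicz_norm_indicator_ge:
  fixes A :: "'a::euclidean_space set"
  assumes p: "0 < p" "p < 1"
    and A: "A \<in> sets lborel" "emeasure lborel A < \<infinity>" "1 \<le> measure lborel A"
  shows "2 powr (-1 / p) / 2 * measure lborel A \<le> orlicz_norm p (indicator A :: 'a \<Rightarrow> real)"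
proof -
  define m where "m = measure lborel A"
  have "emeasure lborel A = ennreal m"
    unfolding m_def using A(2) by (simp add: emeasure_eq_ennreal_measure)
  have modular: "(\<integral>\<^sup>+ x. ennreal (Phi p (\<bar>indicator A x :: real\<bar> / l)) \<partial>lborel)
      = ennreal (Phi p (1 / l) * m)" if "l > 0" for l
  proof -
    have "(\<integral>\<^sup>+ x. ennreal (Phi p (\<bar>indicator A x :: real\<bar> / l)) \<partial>lborel)
        = (\<integral>\<^sup>+ x. ennreal (Phi p (1 / l)) * indicator A x \<partial>lborel)"
      by (intro nn_integral_cong) (auto simp: indicator_def Phi_def)
    also have "\<dots> = ennreal (Phi p (1 / l)) * emeasure lborel A"
      using A(1) by (rule nn_integral_cmult_indicator)
    also have "\<dots> = ennreal (Phi p (1 / l) * m)"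
      using \<open>emeasure lborel A = ennreal m\<close> that
      by (simp add: ennreal_mult Phi_nonneg m_def)
    finally show ?thesis .
  qed
  define S where "S = {l::real. l > 0 \<and>
      (\<integral>\<^sup>+ x. ennreal (Phi p (\<bar>indicator A x :: real\<bar> / l)) \<partial>lborel) \<le> 1}"
  have S: "S = {l. l > 0 \<and> Phi p (1 / l) * m \<le> 1}"
    unfolding S_def using modular by (auto simp: ennreal_le_1)
  have "1 \<le> m" using A(3) unfolding m_def .
  then have "Phi p (1 / m) * m \<le> 1 / m * m"
    by (intro mult_right_mono Phi_le) auto
  then have "m \<in> S"
    unfolding S using \<open>1 \<le> m\<close> by simp
  moreover have "2 powr (-1 / p) / 2 * m \<le> l" if "l \<in> S" for l
    using that Phi_inverse_times_le_1_imp[OF p \<open>1 \<le> m\<close>] unfolding S by blast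
  ultimately have "2 powr (-1 / p) / 2 * m \<le> Inf S"
    by (intro cInf_greatest) auto
  then show ?thesis
    unfolding orlicz_norm_def S_def m_def .
qed

lemma divide_le_divide_of_bounds:
  fixes a b c N m :: real
  assumes "0 \<le> a" "a \<le> b * m" "c * m \<le> N" "0 < c" "0 < m"
  shows "a / N \<le> b / c"
proof -
  have "0 < c * m" using assms(4,5) by simp
  then have "0 < N" using assms(3) by linarith
  then have "a / N \<le> b * m / N" using assms(2) by (simp add: divide_right_mono)
  also have "\<dots> \<le> b * m / (c * m)"
    using assms \<open>0 < N\<close> by (intro divide_left_mono) auto
  finally show ?thesis using \<open>0 < m\<close> by simp
qed

lemma large_ball_oscillation_bounds:
  fixes x :: "'a::euclidean_space"
  assumes p: "0 < p" "p < 1" and g: "g \<in> borel_measurable lborel"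
    and bound: "AE y in lborel. \<bar>g y\<bar> \<le> M" "0 < M"
    and ball: "0 < r" "1 \<le> measure lborel (ball x r)"
  shows "(LINT y:ball x r|lborel. \<bar>g y\<bar>) / orlicz_norm p (indicator (ball x r))
      \<le> 2 * M / (2 powr (-1 / p) / 2)"
    and "(LINT y:ball x r|lborel. \<bar>g y - poly_proj d (ball x r) g y\<bar>) / orlicz_norm p (indicator (ball x r))
      \<le> 2 * M / (2 powr (-1 / p) / 2)"
proof -
  have bound_ball: "AE y in lborel. y \<in> ball x r \<longrightarrow> \<bar>g y\<bar> \<le> M"
    using bound(1) by (rule eventually_mono) auto
  have norm: "2 powr (-1 / p) / 2 * measure lborel (ball x r) \<le> orlicz_norm p (indicator (ball x r))"
    using orlicz_norm_indicator_ge[OF p _ emeasure_lborel_ball_finite ball(2)] by simp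
  have nonneg: "0 \<le> (LINT y:B|lborel. \<bar>f y :: real\<bar>)" for B and f :: "'a \<Rightarrow> real"
    unfolding set_lebesgue_integral_def by (intro integral_nonneg_AE AE_I2) (auto simp: indicator_def)
  have ne: "ball x r \<noteq> {}" using ball(1) by simp
  have "(LINT y:ball x r|lborel. \<bar>g y\<bar>) \<le> M * measure lborel (ball x r)"
    using set_integral_abs_le_measure[OF _ emeasure_lborel_ball_finite g bound_ball] by simp
  also have "\<dots> \<le> 2 * M * measure lborel (ball x r)"
    using bound(2) by simp
  finally show "(LINT y:ball x r|lborel. \<bar>g y\<bar>) / orlicz_norm p (indicator (ball x r))
      \<le> 2 * M / (2 powr (-1 / p) / 2)"
    using ball by (intro divide_le_divide_of_bounds[OF nonneg _ norm]) auto
  show "(LINT y:ball x r|lborel. \<bar>g y - poly_proj d (ball x r) g y\<bar>) / orlicz_norm p (indicator (ball x r))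
      \<le> 2 * M / (2 powr (-1 / p) / 2)"
    using set_integral_abs_diff_poly_proj_le[OF open_ball bounded_ball ne g bound_ball bound(2)] ball
    by (intro divide_le_divide_of_bounds[OF nonneg _ norm]) auto
qed

lemma campanato_iff_campanato_loc:
  fixes g :: "'a::euclidean_space \<Rightarrow> real"
  assumes p: "0 < p" "p < 1" and "essentially_bounded g"
  shows "campanato p g \<longleftrightarrow> campanato_loc p g"
proof -
  obtain M0 where g: "g \<in> borel_measurable lborel" and "AE x in lborel. \<bar>g x\<bar> \<le> M0"
    using assms(3) unfolding essentially_bounded_def by blast
  then have bound: "AE x in lborel. \<bar>g x\<bar> \<le> max M0 1" "0 < max M0 1"
    by (auto elim: eventually_mono)
  let ?d = "deg_p p DIM('a)" and ?K = "2 * max M0 1 / (2 powr (-1 / p) / 2)"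
  let ?osc = "\<lambda>x r. (LINT y:ball x r|lborel. \<bar>g y - poly_proj ?d (ball x r) g y\<bar>)
      / orlicz_norm p (indicator (ball x r))"
  note large = large_ball_oscillation_bounds[OF p g bound]
  show ?thesis
  proof
    assume "campanato p g"
    then obtain C where "locally_integrable g" and "\<forall>x r. r > 0 \<longrightarrow> ?osc x r \<le> C"
      unfolding campanato_def by blast
    with large(1) show "campanato_loc p g"
      unfolding campanato_loc_def by (intro conjI exI[of _ "max C ?K"]) (auto simp: le_max_iff_disj)
  next
    assume "campanato_loc p g"
    then obtain C where "locally_integrable g"
      and small: "\<forall>x r. r > 0 \<longrightarrow> measure lborel (ball x r) < 1 \<longrightarrow> ?osc x r \<le> C"
      unfolding campanato_loc_def by blast
    moreover have "?osc x r \<le> max C ?K" if "r > 0" for x r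
      using large(2)[OF \<open>r > 0\<close>, of x ?d] small \<open>r > 0\<close>
      by (cases "measure lborel (ball x r) < 1") (auto simp: le_max_iff_disj)
    ultimately show "campanato p g"
      unfolding campanato_def by blast
  qed
qed

theorem lemma4p30:
  fixes p :: real
  assumes "0 < p" and "p < 1"
  shows "{g :: 'a::euclidean_space \<Rightarrow> real. essentially_bounded g \<and> campanato p g}
       = {g :: 'a \<Rightarrow> real. essentially_bounded g \<and> campanato_loc p g}"
  using campanato_iff_campanato_loc[OF assms] by blast

end
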